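(* Let $V=x\partial_x+y\partial_y$ on $\mathrm{SL}(2,\mathbb R)$. (1) The only $\mathcal N$-invariant $V$-translators are the surfaces $\Sigma_{\theta_0}$ and the surfaces parametrized by $(s,t)\mapsto (t,y(s),\theta(s))$ with generating curve $\alpha(s)=(y(s),\theta(s))=\big(c(1+\cos(\sqrt2(s-s_0))),\,s\big)$, where $c>0$, $s_0\in\mathbb R$ (and $\frac{s-s_0}{\sqrt2}\in(-\frac\pi2,\frac\pi2)$). (2) The only $\mathcal A$-invariant $V$-translators are the surfaces $\Sigma_{\theta_0}$ and the surface $\Sigma_{x_0}$ with $x_0=0$. (3) Let $\Sigma$ be a rotational surface whose generating curve $\alpha(s)=(x(s),y(s))$ satisfies $x'=2y\cos\varphi$, $y'=2y\sin\varphi$. If $\Sigma$ is a $V$-translator, then $$\varphi'=-\frac{y\cos\varphi+x\sin\varphi}{y}.$$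
   Context: $\mathrm{SL}(2,\mathbb R)$ is given global coordinates $(x,y,\theta)\in\mathbb R\times(0,\infty)\times\mathbb R$ via $(x,y,\theta)\mapsto \begin{pmatrix}1&x\\0&1\end{pmatrix}\begin{pmatrix}\sqrt y&0\\0&1/\sqrt y\end{pmatrix}\begin{pmatrix}\cos\theta&\sin\theta\\-\sin\theta&\cos\theta\end{pmatrix}$, with the metric $\langle\,,\rangle=\frac{dx^2+dy^2}{4y^2}+\left(d\theta+\frac{dx}{2y}\right)^2$. Orthonormal frame: $e_1=2y\partial_x-\partial_\theta$, $e_2=2y\partial_y$, $e_3=\partial_\theta$; the Killing field $V=x\partial_x+y\partial_y$ equals $\frac{1}{2y}(xe_1+ye_2+xe_3)$. A surface with unit normal $N$ and mean curvature $H$ (average of principal curvatures w.r.t. $N$) is a $V$-translator if $H=\langle N,V\rangle$. $\mathcal N$-invariant surfaces: parametrized as $(s,t)\mapsto(t,y(s),\theta(s))$; $N=\frac{y'}{\sqrt2\Phi}(e_1-e_3)+\frac{\sqrt2 y\theta'}{\Phi}e_2$, $H=\frac{\sqrt2 y^2}{\Phi^3}(\theta'y''-y'\theta''+2y\theta'^3)$, $\Phi=\sqrt{y'^2+2y^2\theta'^2}$. $\mathcal A$-invariant surfaces: parametrized as $(s,t)\mapsto(x(s),t,\theta(s))$, $t>0$; $N=\frac1\Phi(-(x'+2t\theta')e_1+x'e_3)$, $H=\frac{2t^2}{\Phi^3}(x'\theta''-\theta'x'')$, $\Phi=\sqrt{(x'+2t\theta')^2+x'^2}$. Rotational surfaces: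 parametrized as $(s,t)\mapsto(x(s),y(s),t)$; when $x'=2y\cos\varphi$, $y'=2y\sin\varphi$, $N=-\sin\varphi\,e_1+\cos\varphi\,e_2$ and $H=\frac{\varphi'}{2}+\cos\varphi$. $\Sigma_{x_0}=\{x=x_0\}$, $\Sigma_{\theta_0}=\{\theta=\theta_0\}$ for constants $x_0,\theta_0$. *)

theory Defs
  imports "HOL-Analysis.Analysis"
begin

text \<open>Tangent vectors of SL(2,R) are represented by their coefficients
  (a1,a2,a3) with respect to the orthonormal frame e1 = 2y d_x - d_theta,
  e2 = 2y d_y, e3 = d_theta.  Since the frame is orthonormal, the metric is
  the Euclidean dot product of coefficient triples.\<close>

definition frame_inner :: "real \<times> real \<times> real \<Rightarrow> real \<times> real \<times> real \<Rightarrow> real" where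
  "frame_inner u v = (case u of (a1, a2, a3) \<Rightarrow> case v of (b1, b2, b3) \<Rightarrow> a1*b1 + a2*b2 + a3*b3)"

text \<open>The Killing field V = x d_x + y d_y = (1/(2y)) (x e1 + y e2 + x e3) at the
  point with coordinates (x, y, theta) (it does not depend on theta).\<close>

definition V_frame :: "real \<Rightarrow> real \<Rightarrow> real \<times> real \<times> real" where
  "V_frame x y = (x / (2*y), y / (2*y), x / (2*y))"

definition C2_on :: "real set \<Rightarrow> (real \<Rightarrow> real) \<Rightarrow> bool" where
  "C2_on I f \<longleftrightarrow> (\<forall>s\<in>I. f differentiable (at s) \<and> deriv f differentiable (at s))
                 \<and> continuous_on I (deriv (deriv f))"

definition open_interval :: "real set \<Rightarrow> bool" where
  "open_interval I \<longleftrightarrow> open I \<and> is_interval I \<and> I \<noteq> {}"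

section \<open>N-invariant surfaces (s,t) |-> (t, y(s), theta(s))\<close>

definition Phi_N :: "real \<Rightarrow> real \<Rightarrow> real \<Rightarrow> real" where
  "Phi_N y y' th' = sqrt (y'^2 + 2 * y^2 * th'^2)"

definition N_N :: "real \<Rightarrow> real \<Rightarrow> real \<Rightarrow> real \<times> real \<times> real" where
  "N_N y y' th' =
     (let P = Phi_N y y' th' in (y' / (sqrt 2 * P), sqrt 2 * y * th' / P, - y' / (sqrt 2 * P)))"

definition H_N :: "real \<Rightarrow> real \<Rightarrow> real \<Rightarrow> real \<Rightarrow> real \<Rightarrow> real" where
  "H_N y y' y'' th' th'' =
     sqrt 2 * y^2 / (Phi_N y y' th')^3 * (th' * y'' - y' * th'' + 2 * y * th'^3)"

definition N_inv_curve :: "real set \<Rightarrow> (real \<Rightarrow> real) \<Rightarrow> (real \<Rightarrow> real) \<Rightarrow> bool" where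
  "N_inv_curve I y th \<longleftrightarrow> open_interval I \<and> C2_on I y \<and> C2_on I th \<and>
     (\<forall>s\<in>I. y s > 0 \<and> Phi_N (y s) (deriv y s) (deriv th s) > 0)"

definition N_inv_V_translator :: "real set \<Rightarrow> (real \<Rightarrow> real) \<Rightarrow> (real \<Rightarrow> real) \<Rightarrow> bool" where
  "N_inv_V_translator I y th \<longleftrightarrow>
     (\<forall>s\<in>I. \<forall>t::real.
        H_N (y s) (deriv y s) (deriv (deriv y) s) (deriv th s) (deriv (deriv th) s)
        = frame_inner (N_N (y s) (deriv y s) (deriv th s)) (V_frame t (y s)))"

section \<open>A-invariant surfaces (s,t) |-> (x(s), t, theta(s)), t > 0\<close>

definition Phi_A :: "real \<Rightarrow> real \<Rightarrow> real \<Rightarrow> real" where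
  "Phi_A t x' th' = sqrt ((x' + 2 * t * th')^2 + x'^2)"

definition N_A :: "real \<Rightarrow> real \<Rightarrow> real \<Rightarrow> real \<times> real \<times> real" where
  "N_A t x' th' = (let P = Phi_A t x' th' in (- (x' + 2 * t * th') / P, 0, x' / P))"

definition H_A :: "real \<Rightarrow> real \<Rightarrow> real \<Rightarrow> real \<Rightarrow> real \<Rightarrow> real" where
  "H_A t x' x'' th' th'' = 2 * t^2 / (Phi_A t x' th')^3 * (x' * th'' - th' * x'')"

definition A_inv_curve :: "real set \<Rightarrow> (real \<Rightarrow> real) \<Rightarrow> (real \<Rightarrow> real) \<Rightarrow> bool" where
  "A_inv_curve I x th \<longleftrightarrow> open_interval I \<and> C2_on I x \<and> C2_on I th \<and>
     (\<forall>s\<in>I. \<forall>t>0. Phi_A t (deriv x s) (deriv th s) > 0)"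

definition A_inv_V_translator :: "real set \<Rightarrow> (real \<Rightarrow> real) \<Rightarrow> (real \<Rightarrow> real) \<Rightarrow> bool" where
  "A_inv_V_translator I x th \<longleftrightarrow>
     (\<forall>s\<in>I. \<forall>t>0.
        H_A t (deriv x s) (deriv (deriv x) s) (deriv th s) (deriv (deriv th) s)
        = frame_inner (N_A t (deriv x s) (deriv th s)) (V_frame (x s) t))"

section \<open>Rotational surfaces (s,t) |-> (x(s), y(s), t) with x' = 2y cos phi, y' = 2y sin phi\<close>

definition N_rot :: "real \<Rightarrow> real \<times> real \<times> real" where
  "N_rot phi = (- sin phi, cos phi, 0)"

definition H_rot :: "real \<Rightarrow> real \<Rightarrow> real" where
  "H_rot phi phi' = phi' / 2 + cos phi"

definition rot_V_translator :: "real set \<Rightarrow> (real \<Rightarrow> real) \<Rightarrow> (real \<Rightarrow> real) \<Rightarrow> (real \<Rightarrow> real) \<Rightarrow> bool" where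
  "rot_V_translator I x y phi \<longleftrightarrow>
     (\<forall>s\<in>I. \<forall>t::real. H_rot (phi s) (deriv phi s) = frame_inner (N_rot (phi s)) (V_frame (x s) (y s)))"

end

(* The translator equation H = <N,V> is first reduced, pointwise, to an ODE for the generating curve.

   For N-invariant surfaces the ODE is 2 y th' y'' - 2 y y' th'' + 2 y^2 th'^3 - th' y'^2 = 0, with
   first integral th'^2 y / (y'^2 + 2 y^2 th'^2). If the integral vanishes, th is constant. Otherwise
   th' never vanishes, and as a function of the phase th / sqrt 2 the function sqrt y solves the
   harmonic oscillator, so sqrt y = R cos (th / sqrt 2 - alpha). Positivity of y keeps the phase
   difference in (-pi/2, pi/2) on the connected interval, and the double angle formula gives
   y = R^2/2 (1 + cos (sqrt 2 (th - sqrt 2 alpha))).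

   For A-invariant surfaces H - <N,V> is a quadratic polynomial in t divided by Phi^3, and its
   coefficients vanish iff x' th'' - th' x'' + 2 th'^3 x = 0 and th' x x' = 0. Then x = 0 wherever
   th' /= 0, so the open sets {th' /= 0} and {x' /= 0} are disjoint; they cover the interval since
   Phi > 0, hence by connectedness th is constant or x vanishes identically. *)

theory Submission
  imports Defs
begin

lemma constant_on_convex_if_deriv_zero:
  fixes f :: "real \<Rightarrow> real"
  assumes "convex I" "\<And>s. s \<in> I \<Longrightarrow> (f has_real_derivative 0) (at s)"
  shows "\<exists>c. \<forall>s\<in>I. f s = c"
  using has_field_derivative_zero_constant[OF assms(1)] assms(2) has_field_derivative_at_within
  by blast

lemma deriv_eq_if_eq_on_open:
  fixes f g :: "real \<Rightarrow> real"
  assumes "open S" "s \<in> S" "\<And>u. u \<in> S \<Longrightarrow> f u = g u" "(g has_real_derivative D) (at s)"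
  shows "deriv f s = D"
  using has_field_derivative_transform_within_open[OF assms(4,1,2)] assms(3)
  by (simp add: DERIV_imp_deriv)

lemma deriv_zero_if_constant_on_open:
  fixes f :: "real \<Rightarrow> real"
  assumes "open S" "\<And>u. u \<in> S \<Longrightarrow> f u = c" "s \<in> S"
  shows "deriv f s = 0" "deriv (deriv f) s = 0"
proof -
  have "deriv f u = 0" if "u \<in> S" for u
    using deriv_eq_if_eq_on_open[OF assms(1) that assms(2)] by simp
  then show "deriv f s = 0" "deriv (deriv f) s = 0"
    using deriv_eq_if_eq_on_open[OF assms(1,3), of "deriv f" "\<lambda>_. 0"] assms(3) by simp_all
qed

lemma C2_on_has_derivative:
  assumes "C2_on I f" "s \<in> I"
  shows "(f has_real_derivative deriv f s) (at s)"
    and "(deriv f has_real_derivative deriv (deriv f) s) (at s)"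
  using assms unfolding C2_on_def by (auto simp: DERIV_deriv_iff_real_differentiable)

lemma C2_on_continuous_on:
  assumes "C2_on I f"
  shows "continuous_on I f" "continuous_on I (deriv f)"
  using C2_on_has_derivative[OF assms]
  by (meson DERIV_isCont continuous_at_imp_continuous_on)+

lemma sqrt2_mult_sqrt2: "sqrt 2 * (sqrt 2 * z) = 2 * (z :: real)"
  by (simp add: mult.assoc[symmetric])

lemma quadratic_zero_on_pos_imp_coeffs_zero:
  fixes a b c :: real
  assumes "\<And>t. t > 0 \<Longrightarrow> a * t^2 + b * t + c = 0"
  shows "a = 0" "b = 0" "c = 0"
  using assms[of 1] assms[of 2] assms[of 3] by simp_all

lemma harmonic_along_phase:
  fixes g G ph ph' :: "real \<Rightarrow> real"
  assumes I: "convex I"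
    and g: "\<And>s. s \<in> I \<Longrightarrow> (g has_real_derivative G s * ph' s) (at s)"
    and G: "\<And>s. s \<in> I \<Longrightarrow> (G has_real_derivative - g s * ph' s) (at s)"
    and ph: "\<And>s. s \<in> I \<Longrightarrow> (ph has_real_derivative ph' s) (at s)"
  obtains A B where "\<And>s. s \<in> I \<Longrightarrow> g s = A * cos (ph s) + B * sin (ph s)"
proof -
  \<comment> \<open>(g, G) rotates with angular velocity ph', so turning it back by the angle ph gives constants.\<close>
  define A where "A s = g s * cos (ph s) - G s * sin (ph s)" for s
  define B where "B s = g s * sin (ph s) + G s * cos (ph s)" for s
  have DA: "(A has_real_derivative 0) (at s)" and DB: "(B has_real_derivative 0) (at s)"
    if "s \<in> I" for s
    unfolding A_def[abs_def] B_def[abs_def]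
    by (auto intro!: derivative_eq_intros g[OF that] G[OF that] ph[OF that] simp: algebra_simps)
  obtain A0 where A0: "\<forall>s\<in>I. A s = A0" using constant_on_convex_if_deriv_zero[OF I DA] ..
  obtain B0 where B0: "\<forall>s\<in>I. B s = B0" using constant_on_convex_if_deriv_zero[OF I DB] ..
  have "g s = A s * cos (ph s) + B s * sin (ph s)" for s
  proof -
    have "A s * cos (ph s) + B s * sin (ph s) = g s * ((sin (ph s))\<^sup>2 + (cos (ph s))\<^sup>2)"
      unfolding A_def B_def
      by (simp add: algebra_simps power2_eq_square del: sin_cos_squared_add sin_cos_squared_add2 sin_cos_squared_add3)
    then show ?thesis by simp
  qed
  then have "g s = A0 * cos (ph s) + B0 * sin (ph s)" if "s \<in> I" for s
    using A0 B0 that by simp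
  then show thesis by (rule that)
qed

lemma cos_sin_phase_form:
  fixes A B w :: real
  assumes pos: "A * cos w + B * sin w > 0"
  obtains R \<alpha> where "R > 0" "\<bar>w - \<alpha>\<bar> < pi / 2" "\<And>u. A * cos u + B * sin u = R * cos (u - \<alpha>)"
proof -
  define P where "P = A * cos w + B * sin w"
  define Q where "Q = B * cos w - A * sin w"
  define \<beta> where "\<beta> = arctan (Q / P)"
  have \<beta>: "\<bar>\<beta>\<bar> < pi / 2" unfolding \<beta>_def using arctan[of "Q / P"] by (simp add: abs_if)
  then have cos\<beta>: "cos \<beta> > 0" by (simp add: cos_gt_zero_pi abs_less_iff)
  have sin\<beta>: "sin \<beta> = Q / P * cos \<beta>"
    using arctan[of "Q / P"] cos\<beta> unfolding \<beta>_def tan_def by (simp add: field_simps)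
  have P: "P > 0" using pos unfolding P_def .
  have phase: "A * cos u + B * sin u = P / cos \<beta> * cos (u - (w + \<beta>))" for u
  proof -
    have "P * cos (u - w) + Q * sin (u - w)
        = A * cos u * ((sin w)\<^sup>2 + (cos w)\<^sup>2) + B * sin u * ((sin w)\<^sup>2 + (cos w)\<^sup>2)"
      unfolding P_def Q_def cos_diff sin_diff
      by (simp add: algebra_simps power2_eq_square del: sin_cos_squared_add sin_cos_squared_add2 sin_cos_squared_add3)
    then have "A * cos u + B * sin u = P * cos (u - w) + Q * sin (u - w)" by simp
    also have "\<dots> = P / cos \<beta> * cos (u - w - \<beta>)"
      using cos\<beta> P unfolding cos_diff[of "u - w"] sin\<beta> by (simp add: field_simps)
    finally show ?thesis by (simp add: algebra_simps)
  qed
  show thesis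
  proof (rule that)
    show "P / cos \<beta> > 0" using P cos\<beta> by simp
    show "\<bar>w - (w + \<beta>)\<bar> < pi / 2" using \<beta> by simp
  qed (rule phase)
qed

lemma abs_lt_pi_half_if_cos_pos_on_connected:
  fixes f :: "real \<Rightarrow> real"
  assumes "connected I" "continuous_on I f" "s0 \<in> I" "\<bar>f s0\<bar> < pi / 2"
    and cos_pos: "\<And>s. s \<in> I \<Longrightarrow> cos (f s) > 0" and "s \<in> I"
  shows "\<bar>f s\<bar> < pi / 2"
proof (rule ccontr)
  have interval: "is_interval (f ` I)"
    using assms(1,2) connected_continuous_image is_interval_connected_1 by blast
  assume "\<not> \<bar>f s\<bar> < pi / 2"
  then have "f s0 \<le> pi / 2 \<and> pi / 2 \<le> f s \<or> f s \<le> - (pi / 2) \<and> - (pi / 2) \<le> f s0"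
    using assms(4) by linarith
  then have "pi / 2 \<in> f ` I \<or> - (pi / 2) \<in> f ` I"
    using mem_is_interval_1_I[OF interval imageI[OF assms(3)] imageI[OF assms(6)]]
      mem_is_interval_1_I[OF interval imageI[OF assms(6)] imageI[OF assms(3)]] by blast
  moreover have "f s' \<noteq> pi / 2" "f s' \<noteq> - (pi / 2)" if "s' \<in> I" for s'
    using cos_pos[OF that] by (metis cos_pi_half cos_minus less_irrefl)+
  ultimately show False by (metis imageE)
qed

definition N_translator_residual :: "real \<Rightarrow> real \<Rightarrow> real \<Rightarrow> real \<Rightarrow> real \<Rightarrow> real" where
  "N_translator_residual y y' y'' th' th'' = 2*y*th'*y'' - 2*y*y'*th'' + 2*y^2*th'^3 - th'*y'^2"

lemma H_N_minus_inner_N_V: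
  fixes y y1 y2 t1 t2 t :: real
  assumes "y \<noteq> 0"
  shows "H_N y y1 y2 t1 t2 - frame_inner (N_N y y1 t1) (V_frame t y)
         = y * sqrt 2 / (2 * Phi_N y y1 t1 ^ 3) * N_translator_residual y y1 y2 t1 t2"
proof -
  define P where "P = Phi_N y y1 t1"
  have P2: "P^2 = y1^2 + 2*y^2*t1^2" unfolding P_def Phi_N_def by simp
  have inner: "frame_inner (N_N y y1 t1) (V_frame t y) = y * t1 * sqrt 2 / (2 * P)"
    unfolding frame_inner_def N_N_def V_frame_def Let_def P_def[symmetric]
    using assms by (simp add: field_simps)
  show ?thesis
  proof (cases "P = 0")
    case True
    then show ?thesis using inner unfolding H_N_def P_def[symmetric] by simp
  next
    case False
    have "y * t1 * sqrt 2 / (2 * P) = y * sqrt 2 * (t1 * P^2) / (2 * P^3)"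
      using False by (simp add: power2_eq_square power3_eq_cube)
    moreover have "H_N y y1 y2 t1 t2 = y * sqrt 2 * (2*y*(t1*y2 - y1*t2 + 2*y*t1^3)) / (2 * P^3)"
      unfolding H_N_def P_def[symmetric] by (simp add: power2_eq_square)
    ultimately have "H_N y y1 y2 t1 t2 - frame_inner (N_N y y1 t1) (V_frame t y)
        = y * sqrt 2 / (2 * P^3) * (2*y*(t1*y2 - y1*t2 + 2*y*t1^3) - t1 * P^2)"
      unfolding inner by (simp add: right_diff_distrib diff_divide_distrib)
    also have "2*y*(t1*y2 - y1*t2 + 2*y*t1^3) - t1 * P^2 = N_translator_residual y y1 y2 t1 t2"
      unfolding P2 N_translator_residual_def by (simp add: algebra_simps power2_eq_square power3_eq_cube)
    finally show ?thesis unfolding P_def .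
  qed
qed

lemma N_inv_V_translator_iff_residual:
  assumes "N_inv_curve I y th"
  shows "N_inv_V_translator I y th \<longleftrightarrow>
    (\<forall>s\<in>I. N_translator_residual (y s) (deriv y s) (deriv (deriv y) s) (deriv th s) (deriv (deriv th) s) = 0)"
proof -
  have "H_N (y s) (deriv y s) (deriv (deriv y) s) (deriv th s) (deriv (deriv th) s)
          = frame_inner (N_N (y s) (deriv y s) (deriv th s)) (V_frame t (y s))
        \<longleftrightarrow> N_translator_residual (y s) (deriv y s) (deriv (deriv y) s) (deriv th s) (deriv (deriv th) s) = 0"
    if "s \<in> I" for s t
  proof -
    have y: "y s \<noteq> 0" and "Phi_N (y s) (deriv y s) (deriv th s) \<noteq> 0"
      using assms that unfolding N_inv_curve_def by fastforce+
    then have "y s * sqrt 2 / (2 * Phi_N (y s) (deriv y s) (deriv th s) ^ 3) \<noteq> 0" by simp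
    with H_N_minus_inner_N_V[OF y] show ?thesis by (metis eq_iff_diff_eq_0 mult_eq_0_iff)
  qed
  then show ?thesis unfolding N_inv_V_translator_def by (simp cong: ball_cong)
qed

lemma N_translator_first_integral:
  assumes C: "N_inv_curve I y th"
    and res: "\<And>s. s \<in> I \<Longrightarrow>
      N_translator_residual (y s) (deriv y s) (deriv (deriv y) s) (deriv th s) (deriv (deriv th) s) = 0"
  shows "\<exists>k. \<forall>s\<in>I. deriv th s ^ 2 * y s / (deriv y s ^ 2 + 2 * y s ^ 2 * deriv th s ^ 2) = k"
proof -
  have I: "convex I" and Cy: "C2_on I y" and Ct: "C2_on I th"
    using C unfolding N_inv_curve_def open_interval_def by (auto simp: is_interval_convex)
  define y1 where "y1 = deriv y"
  define y2 where "y2 = deriv (deriv y)"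
  define t1 where "t1 = deriv th"
  define t2 where "t2 = deriv (deriv th)"
  define K where "K s = t1 s ^ 2 * y s / (y1 s ^ 2 + 2 * y s ^ 2 * t1 s ^ 2)" for s
  have DK: "(K has_real_derivative 0) (at s)" if s: "s \<in> I" for s
  proof -
    have D: "y1 s ^ 2 + 2 * y s ^ 2 * t1 s ^ 2 \<noteq> 0"
      using C s unfolding N_inv_curve_def Phi_N_def y1_def t1_def by fastforce
    have "(K has_real_derivative
        ((2 * t1 s * t2 s * y s + t1 s ^ 2 * y1 s) * (y1 s ^ 2 + 2 * y s ^ 2 * t1 s ^ 2)
          - t1 s ^ 2 * y s * (2 * y1 s * y2 s + 4 * y s * y1 s * t1 s ^ 2 + 4 * y s ^ 2 * t1 s * t2 s))
        / (y1 s ^ 2 + 2 * y s ^ 2 * t1 s ^ 2) ^ 2) (at s)"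
      unfolding K_def[abs_def] y2_def t2_def using D C2_on_has_derivative[OF Cy s] C2_on_has_derivative[OF Ct s]
      by (auto intro!: derivative_eq_intros simp: y1_def t1_def algebra_simps power2_eq_square)
    moreover have "(2 * t1 s * t2 s * y s + t1 s ^ 2 * y1 s) * (y1 s ^ 2 + 2 * y s ^ 2 * t1 s ^ 2)
          - t1 s ^ 2 * y s * (2 * y1 s * y2 s + 4 * y s * y1 s * t1 s ^ 2 + 4 * y s ^ 2 * t1 s * t2 s)
        = - t1 s * y1 s * N_translator_residual (y s) (y1 s) (y2 s) (t1 s) (t2 s)"
      unfolding N_translator_residual_def by (simp add: power2_eq_square power3_eq_cube algebra_simps)
    ultimately show ?thesis using res[OF s] unfolding y1_def y2_def t1_def t2_def by simp
  qed
  show ?thesis using constant_on_convex_if_deriv_zero[OF I DK] unfolding K_def y1_def t1_def .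
qed

lemma N_translator_d2_sqrt_dth2:
  assumes C: "N_inv_curve I y th"
    and res: "\<And>s. s \<in> I \<Longrightarrow>
      N_translator_residual (y s) (deriv y s) (deriv (deriv y) s) (deriv th s) (deriv (deriv th) s) = 0"
    and moving: "\<And>s. s \<in> I \<Longrightarrow> deriv th s \<noteq> 0"
    and s: "s \<in> I"
  shows "((\<lambda>s. deriv y s / (2 * sqrt (y s) * deriv th s)) has_real_derivative
          - sqrt (y s) * deriv th s / 2) (at s)"
proof -
  have Cy: "C2_on I y" and Ct: "C2_on I th" and ypos: "y s > 0"
    using C s unfolding N_inv_curve_def by auto
  define y1 where "y1 = deriv y"
  define y2 where "y2 = deriv (deriv y)"
  define t1 where "t1 = deriv th"
  define t2 where "t2 = deriv (deriv th)"
  define g where "g s = sqrt (y s)" for s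
  have Dy: "(y has_real_derivative y1 s) (at s)" "(y1 has_real_derivative y2 s) (at s)"
    and Dt: "(t1 has_real_derivative t2 s) (at s)"
    using C2_on_has_derivative[OF Cy s] C2_on_has_derivative[OF Ct s]
    unfolding y1_def y2_def t1_def t2_def by auto
  have g: "g s > 0" "g s * g s = y s" and t1: "t1 s \<noteq> 0"
    using ypos moving[OF s] unfolding g_def t1_def by auto
  have Dg: "(g has_real_derivative y1 s / (2 * g s)) (at s)"
    unfolding g_def[abs_def] using ypos by (auto intro!: derivative_eq_intros Dy simp: field_simps)
  have D: "((\<lambda>s. y1 s / (2 * g s * t1 s)) has_real_derivative
      (y2 s * (2 * g s * t1 s) - y1 s * (2 * (y1 s / (2 * g s)) * t1 s + 2 * g s * t2 s))
        / (2 * g s * t1 s)^2) (at s)"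
    using g t1 by (auto intro!: derivative_eq_intros Dy Dg Dt simp: algebra_simps power2_eq_square)
  have E: "y2 s * (2 * g s * t1 s) - y1 s * (2 * (y1 s / (2 * g s)) * t1 s + 2 * g s * t2 s)
      = - g s * t1 s / 2 * (2 * g s * t1 s)^2"
    using res[OF s] g t1 unfolding g(2)[symmetric] N_translator_residual_def y1_def y2_def t1_def t2_def
    by (simp add: field_simps power2_eq_square power3_eq_cube)
  have "((\<lambda>s. y1 s / (2 * g s * t1 s)) has_real_derivative - g s * t1 s / 2) (at s)"
    using D g t1 unfolding E by simp
  then show ?thesis unfolding g_def y1_def t1_def .
qed

lemma N_translator_sqrt_harmonic:
  assumes C: "N_inv_curve I y th"
    and res: "\<And>s. s \<in> I \<Longrightarrow>
      N_translator_residual (y s) (deriv y s) (deriv (deriv y) s) (deriv th s) (deriv (deriv th) s) = 0"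
    and moving: "\<And>s. s \<in> I \<Longrightarrow> deriv th s \<noteq> 0"
  obtains A B where "\<And>s. s \<in> I \<Longrightarrow> sqrt (y s) = A * cos (th s / sqrt 2) + B * sin (th s / sqrt 2)"
proof -
  have I: "convex I" and Cy: "C2_on I y" and Ct: "C2_on I th" and ypos: "\<And>s. s \<in> I \<Longrightarrow> y s > 0"
    using C unfolding N_inv_curve_def open_interval_def by (auto simp: is_interval_convex)
  \<comment> \<open>h is the derivative of sqrt y with respect to th, so that sqrt y and sqrt 2 h form
    a harmonic pair in the phase th / sqrt 2.\<close>
  define h where "h s = deriv y s / (2 * sqrt (y s) * deriv th s)" for s
  have Dg: "((\<lambda>s. sqrt (y s)) has_real_derivative sqrt 2 * h s * (deriv th s / sqrt 2)) (at s)"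
    if "s \<in> I" for s
    using ypos[OF that] moving[OF that] unfolding h_def
    by (auto intro!: derivative_eq_intros C2_on_has_derivative(1)[OF Cy that] simp: field_simps)
  have DG: "((\<lambda>s. sqrt 2 * h s) has_real_derivative - sqrt (y s) * (deriv th s / sqrt 2)) (at s)"
    if "s \<in> I" for s
  proof -
    have "sqrt 2 * (- sqrt (y s) * deriv th s / 2) = - sqrt (y s) * (deriv th s / sqrt 2)"
      by (simp add: field_simps)
    then show ?thesis
      using DERIV_cmult[OF N_translator_d2_sqrt_dth2[OF C res moving that, folded h_def]] by metis
  qed
  have Dph: "((\<lambda>s. th s / sqrt 2) has_real_derivative deriv th s / sqrt 2) (at s)" if "s \<in> I" for s
    by (rule DERIV_cdivide[OF C2_on_has_derivative(1)[OF Ct that]])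
  show thesis using harmonic_along_phase[OF I Dg DG Dph] that by blast
qed

lemma N_translator_profile_if_moving:
  assumes C: "N_inv_curve I y th"
    and res: "\<And>s. s \<in> I \<Longrightarrow>
      N_translator_residual (y s) (deriv y s) (deriv (deriv y) s) (deriv th s) (deriv (deriv th) s) = 0"
    and moving: "\<And>s. s \<in> I \<Longrightarrow> deriv th s \<noteq> 0"
  shows "\<exists>c>0. \<exists>s0. \<forall>s\<in>I. \<bar>th s - s0\<bar> < pi / sqrt 2 \<and> y s = c * (1 + cos (sqrt 2 * (th s - s0)))"
proof -
  have I: "connected I" "I \<noteq> {}" and Ct: "C2_on I th" and ypos: "\<And>s. s \<in> I \<Longrightarrow> y s > 0"
    using C unfolding N_inv_curve_def open_interval_def by (auto simp: is_interval_connected)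
  obtain A B where AB: "\<And>s. s \<in> I \<Longrightarrow> sqrt (y s) = A * cos (th s / sqrt 2) + B * sin (th s / sqrt 2)"
    using N_translator_sqrt_harmonic[OF C res moving] by blast
  obtain s1 where s1: "s1 \<in> I" using I(2) by blast
  then have "A * cos (th s1 / sqrt 2) + B * sin (th s1 / sqrt 2) > 0"
    using AB ypos by (metis real_sqrt_gt_zero)
  then obtain R \<alpha> where R: "R > 0" and s1_bound: "\<bar>th s1 / sqrt 2 - \<alpha>\<bar> < pi / 2"
    and phase: "\<And>u. A * cos u + B * sin u = R * cos (u - \<alpha>)"
    using cos_sin_phase_form by blast
  define f where "f s = th s / sqrt 2 - \<alpha>" for s
  have sqrt_y: "sqrt (y s) = R * cos (f s)" if "s \<in> I" for s
    using AB[OF that] phase unfolding f_def by simp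
  have "continuous_on I f"
    unfolding f_def by (intro continuous_intros C2_on_continuous_on(1)[OF Ct]) simp
  moreover have "cos (f s) > 0" if "s \<in> I" for s
    using sqrt_y[OF that] ypos[OF that] R by (metis real_sqrt_gt_zero zero_less_mult_pos)
  ultimately have bound: "\<bar>f s\<bar> < pi / 2" if "s \<in> I" for s
    using abs_lt_pi_half_if_cos_pos_on_connected[OF I(1) _ s1] s1_bound that unfolding f_def by blast
  have "\<bar>th s - sqrt 2 * \<alpha>\<bar> < pi / sqrt 2 \<and> y s = R^2 / 2 * (1 + cos (sqrt 2 * (th s - sqrt 2 * \<alpha>)))"
    if s: "s \<in> I" for s
  proof
    have "\<bar>th s - sqrt 2 * \<alpha>\<bar> = sqrt 2 * \<bar>f s\<bar>"
      unfolding f_def by (simp add: field_simps abs_mult[symmetric])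
    with bound[OF s] show "\<bar>th s - sqrt 2 * \<alpha>\<bar> < pi / sqrt 2"
      by (simp add: field_simps)
    have "y s = (R * cos (f s))^2" using sqrt_y[OF s] ypos[OF s] by (metis real_sqrt_pow2 less_imp_le)
    also have "\<dots> = R^2 / 2 * (1 + cos (2 * f s))" by (simp add: cos_double_cos power_mult_distrib)
    also have "2 * f s = sqrt 2 * (th s - sqrt 2 * \<alpha>)" unfolding f_def by (simp add: field_simps)
    finally show "y s = R^2 / 2 * (1 + cos (sqrt 2 * (th s - sqrt 2 * \<alpha>)))" .
  qed
  then show ?thesis using R by (intro exI[of _ "R^2 / 2"]) auto
qed

lemma N_translator_residual_of_cos_profile:
  assumes I: "open I" and Ct: "C2_on I th"
    and y: "\<And>s. s \<in> I \<Longrightarrow> y s = c * (1 + cos (sqrt 2 * (th s - s0)))" and s: "s \<in> I"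
  shows "N_translator_residual (y s) (deriv y s) (deriv (deriv y) s) (deriv th s) (deriv (deriv th) s) = 0"
proof -
  define t1 where "t1 = deriv th"
  define t2 where "t2 = deriv (deriv th)"
  define u where "u s = sqrt 2 * (th s - s0)" for s
  have Dt: "(th has_real_derivative t1 s) (at s)" "(t1 has_real_derivative t2 s) (at s)" if "s \<in> I" for s
    using C2_on_has_derivative[OF Ct that] unfolding t1_def t2_def by auto
  have y1: "deriv y s = - c * sin (u s) * (sqrt 2 * t1 s)" if "s \<in> I" for s
    using y by (intro deriv_eq_if_eq_on_open[OF I that, of _ "\<lambda>s. c * (1 + cos (u s))"])
      (auto simp: u_def intro!: derivative_eq_intros Dt[OF that])
  have y2: "deriv (deriv y) s = - 2 * c * cos (u s) * t1 s ^ 2 - c * sin (u s) * (sqrt 2 * t2 s)"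
    using y1 by (intro deriv_eq_if_eq_on_open[OF I s, of _ "\<lambda>s. - c * sin (u s) * (sqrt 2 * t1 s)"])
      (auto simp: u_def power2_eq_square sqrt2_mult_sqrt2 intro!: derivative_eq_intros Dt[OF s])
  have cos_sq: "cos (u s) * cos (u s) = 1 - sin (u s) * sin (u s)"
    using sin_cos_squared_add3[of "u s"] by linarith
  have "N_translator_residual (y s) (deriv y s) (deriv (deriv y) s) (t1 s) (t2 s) = 0"
    unfolding N_translator_residual_def y[OF s, folded u_def] y1[OF s] y2
    by (simp add: power2_eq_square power3_eq_cube algebra_simps sqrt2_mult_sqrt2 cos_sq)
  then show ?thesis unfolding t1_def t2_def .
qed

lemma N_translator_profile:
  assumes C: "N_inv_curve I y th"
    and res: "\<And>s. s \<in> I \<Longrightarrow>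
      N_translator_residual (y s) (deriv y s) (deriv (deriv y) s) (deriv th s) (deriv (deriv th) s) = 0"
  shows "(\<exists>th0. \<forall>s\<in>I. th s = th0) \<or>
    (\<exists>c>0. \<exists>s0. \<forall>s\<in>I. \<bar>th s - s0\<bar> < pi / sqrt 2 \<and> y s = c * (1 + cos (sqrt 2 * (th s - s0))))"
proof -
  have I: "convex I" and Ct: "C2_on I th"
    using C unfolding N_inv_curve_def open_interval_def by (auto simp: is_interval_convex)
  obtain k where k: "\<And>s. s \<in> I \<Longrightarrow> deriv th s ^ 2 * y s / (deriv y s ^ 2 + 2 * y s ^ 2 * deriv th s ^ 2) = k"
    using N_translator_first_integral[OF C res] by blast
  show ?thesis
  proof (cases "k = 0")
    case True
    have "deriv th s = 0" if "s \<in> I" for s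
      using k[OF that] True C that unfolding N_inv_curve_def Phi_N_def by (auto simp: divide_eq_0_iff)
    then have Dth: "(th has_real_derivative 0) (at s)" if "s \<in> I" for s
      using C2_on_has_derivative(1)[OF Ct that] that by simp
    show ?thesis using constant_on_convex_if_deriv_zero[OF I Dth] by blast
  next
    case False
    then have "deriv th s \<noteq> 0" if "s \<in> I" for s using k[OF that] by auto
    then show ?thesis using N_translator_profile_if_moving[OF C res] by blast
  qed
qed

lemma N_inv_V_translator_iff_profile:
  assumes C: "N_inv_curve I y th"
  shows "N_inv_V_translator I y th \<longleftrightarrow>
    (\<exists>th0. \<forall>s\<in>I. th s = th0) \<or>
    (\<exists>c>0. \<exists>s0. \<forall>s\<in>I. \<bar>th s - s0\<bar> < pi / sqrt 2 \<and> y s = c * (1 + cos (sqrt 2 * (th s - s0))))"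
  unfolding N_inv_V_translator_iff_residual[OF C]
proof (intro iffI ballI)
  assume "\<forall>s\<in>I. N_translator_residual (y s) (deriv y s) (deriv (deriv y) s) (deriv th s) (deriv (deriv th) s) = 0"
  then show "(\<exists>th0. \<forall>s\<in>I. th s = th0) \<or>
    (\<exists>c>0. \<exists>s0. \<forall>s\<in>I. \<bar>th s - s0\<bar> < pi / sqrt 2 \<and> y s = c * (1 + cos (sqrt 2 * (th s - s0))))"
    using N_translator_profile[OF C] by blast
next
  have I: "open I" and Ct: "C2_on I th"
    using C unfolding N_inv_curve_def open_interval_def by auto
  fix s assume s: "s \<in> I" and "(\<exists>th0. \<forall>s\<in>I. th s = th0) \<or>
    (\<exists>c>0. \<exists>s0. \<forall>s\<in>I. \<bar>th s - s0\<bar> < pi / sqrt 2 \<and> y s = c * (1 + cos (sqrt 2 * (th s - s0))))"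
  then consider th0 where "\<And>s. s \<in> I \<Longrightarrow> th s = th0"
    | c s0 where "\<And>s. s \<in> I \<Longrightarrow> y s = c * (1 + cos (sqrt 2 * (th s - s0)))" by blast
  then show "N_translator_residual (y s) (deriv y s) (deriv (deriv y) s) (deriv th s) (deriv (deriv th) s) = 0"
  proof cases
    case 1
    then show ?thesis using deriv_zero_if_constant_on_open[where f = th and c = th0, OF I 1 s]
      by (simp add: N_translator_residual_def)
  next
    case 2
    then show ?thesis by (rule N_translator_residual_of_cos_profile[OF I Ct _ s])
  qed
qed

lemma H_A_minus_inner_N_V:
  fixes t x x1 x2 t1 t2 :: real
  assumes "t \<noteq> 0"
  shows "H_A t x1 x2 t1 t2 - frame_inner (N_A t x1 t1) (V_frame x t)
       = ((2*(x1*t2 - t1*x2) + 4*t1^3*x) * t^2 + 4*t1^2*x*x1 * t + 2*t1*x*x1^2) / Phi_A t x1 t1 ^ 3"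
proof -
  define P where "P = Phi_A t x1 t1"
  have P2: "P^2 = (x1 + 2*t*t1)^2 + x1^2" unfolding P_def Phi_A_def by simp
  have inner: "frame_inner (N_A t x1 t1) (V_frame x t) = - t1 * x / P"
    unfolding frame_inner_def N_A_def V_frame_def Let_def P_def[symmetric]
    using assms by (cases "P = 0") (simp_all add: field_simps)
  show ?thesis
  proof (cases "P = 0")
    case True
    then show ?thesis using inner unfolding H_A_def P_def[symmetric] by simp
  next
    case False
    have "t1 * x / P = t1 * x * P^2 / P^3"
      using False by (simp add: power2_eq_square power3_eq_cube)
    then have "H_A t x1 x2 t1 t2 + t1 * x / P = (2*t^2*(x1*t2 - t1*x2) + t1 * x * P^2) / P^3"
      unfolding H_A_def P_def[symmetric] by (simp add: add_divide_distrib)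
    then show ?thesis
      unfolding inner P2 P_def[symmetric] by (simp add: algebra_simps power2_eq_square power3_eq_cube)
  qed
qed

lemma A_translator_at_point_iff:
  fixes x x1 x2 t1 t2 :: real
  assumes "\<forall>t>0. Phi_A t x1 t1 > 0"
  shows "(\<forall>t>0. H_A t x1 x2 t1 t2 = frame_inner (N_A t x1 t1) (V_frame x t))
     \<longleftrightarrow> x1*t2 - t1*x2 + 2*t1^3*x = 0 \<and> t1*x*x1 = 0"
    (is "?translator \<longleftrightarrow> ?ode")
proof -
  have translator_iff: "?translator \<longleftrightarrow>
      (\<forall>t>0. (2*(x1*t2 - t1*x2) + 4*t1^3*x) * t^2 + 4*t1^2*x*x1 * t + 2*t1*x*x1^2 = 0)"
  proof -
    have "H_A t x1 x2 t1 t2 = frame_inner (N_A t x1 t1) (V_frame x t)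
       \<longleftrightarrow> (2*(x1*t2 - t1*x2) + 4*t1^3*x) * t^2 + 4*t1^2*x*x1 * t + 2*t1*x*x1^2 = 0" if "t > 0" for t
    proof -
      have "Phi_A t x1 t1 ^ 3 \<noteq> 0" using assms that by force
      then show ?thesis
        using H_A_minus_inner_N_V[of t] that by (metis divide_eq_0_iff eq_iff_diff_eq_0 less_irrefl)
    qed
    then show ?thesis by simp
  qed
  show ?thesis
  proof
    assume ?translator
    then have "2*(x1*t2 - t1*x2) + 4*t1^3*x = 0" "4*t1^2*x*x1 = 0"
      unfolding translator_iff using quadratic_zero_on_pos_imp_coeffs_zero by blast+
    then show ?ode by (simp add: power2_eq_square)
  next
    assume ode: ?ode
    have "2*(x1*t2 - t1*x2) + 4*t1^3*x = 2*(x1*t2 - t1*x2 + 2*t1^3*x)" by (simp add: algebra_simps)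
    also have "\<dots> = 0" using ode by simp
    finally have a: "2*(x1*t2 - t1*x2) + 4*t1^3*x = 0" .
    have b: "4*t1^2*x*x1 = 0" "2*t1*x*x1^2 = 0" using ode by (auto simp: power2_eq_square)
    show ?translator unfolding translator_iff a b by simp
  qed
qed

lemma A_inv_V_translator_iff_ode:
  assumes "A_inv_curve I x th"
  shows "A_inv_V_translator I x th \<longleftrightarrow>
    (\<forall>s\<in>I. deriv x s * deriv (deriv th) s - deriv th s * deriv (deriv x) s + 2 * deriv th s ^ 3 * x s = 0
          \<and> deriv th s * x s * deriv x s = 0)"
proof -
  have "(\<forall>t>0. H_A t (deriv x s) (deriv (deriv x) s) (deriv th s) (deriv (deriv th) s)
                = frame_inner (N_A t (deriv x s) (deriv th s)) (V_frame (x s) t))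
     \<longleftrightarrow> deriv x s * deriv (deriv th) s - deriv th s * deriv (deriv x) s + 2 * deriv th s ^ 3 * x s = 0
          \<and> deriv th s * x s * deriv x s = 0" if "s \<in> I" for s
  proof -
    have "\<forall>t>0. Phi_A t (deriv x s) (deriv th s) > 0"
      using assms that unfolding A_inv_curve_def by blast
    then show ?thesis by (rule A_translator_at_point_iff)
  qed
  then show ?thesis unfolding A_inv_V_translator_def by (simp cong: ball_cong)
qed

lemma A_translator_x_zero_where_th_moves:
  assumes I: "open I" and Cx: "C2_on I x" and Ct: "C2_on I th"
    and ode: "\<And>s. s \<in> I \<Longrightarrow>
      deriv x s * deriv (deriv th) s - deriv th s * deriv (deriv x) s + 2 * deriv th s ^ 3 * x s = 0
      \<and> deriv th s * x s * deriv x s = 0"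
    and p: "p \<in> I" "deriv th p \<noteq> 0"
  shows "x p = 0"
proof (rule ccontr)
  assume xp: "x p \<noteq> 0"
  define W where "W = (I \<inter> deriv th -` (- {0})) \<inter> x -` (- {0})"
  have "open (I \<inter> deriv th -` (- {0}))"
    using continuous_open_preimage C2_on_continuous_on(2)[OF Ct] I by blast
  moreover have "continuous_on (I \<inter> deriv th -` (- {0})) x"
    using C2_on_continuous_on(1)[OF Cx] continuous_on_subset by blast
  ultimately have W: "open W" unfolding W_def using continuous_open_preimage by blast
  have "deriv x s = 0" if "s \<in> W" for s
    using ode[of s] that unfolding W_def by auto
  then have "deriv x p = 0" "deriv (deriv x) p = 0"
    using deriv_zero_if_constant_on_open(1)[OF W, of "deriv x"] p xp unfolding W_def by auto
  then show False using ode[OF p(1)] p(2) xp by simp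
qed

lemma A_translator_dichotomy:
  assumes C: "A_inv_curve I x th"
    and ode: "\<And>s. s \<in> I \<Longrightarrow>
      deriv x s * deriv (deriv th) s - deriv th s * deriv (deriv x) s + 2 * deriv th s ^ 3 * x s = 0
      \<and> deriv th s * x s * deriv x s = 0"
  shows "(\<exists>th0. \<forall>s\<in>I. th s = th0) \<or> (\<forall>s\<in>I. x s = 0)"
proof -
  have I: "open I" "connected I" "convex I" and Cx: "C2_on I x" and Ct: "C2_on I th"
    using C unfolding A_inv_curve_def open_interval_def by (auto simp: is_interval_connected is_interval_convex)
  define U where "U = I \<inter> deriv th -` (- {0})"
  define V where "V = I \<inter> deriv x -` (- {0})"
  have U: "open U" and V: "open V"
    unfolding U_def V_def
    by (intro continuous_open_preimage[OF C2_on_continuous_on(2)] I(1) Ct Cx open_Compl closed_singleton)+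
  have x_U: "x s = 0" if "s \<in> U" for s
    using that unfolding U_def by (intro A_translator_x_zero_where_th_moves[OF I(1) Cx Ct ode]) auto
  have "deriv x s = 0" if "s \<in> U" for s
    by (rule deriv_zero_if_constant_on_open(1)[OF U x_U that])
  then have "U \<inter> V \<inter> I = {}" unfolding V_def by auto
  moreover have cover: "I \<subseteq> U \<union> V"
  proof
    fix s assume "s \<in> I"
    then have "Phi_A 1 (deriv x s) (deriv th s) > 0" using C unfolding A_inv_curve_def by auto
    then show "s \<in> U \<union> V" using \<open>s \<in> I\<close> unfolding U_def V_def Phi_A_def by auto
  qed
  ultimately have "U \<inter> I = {} \<or> V \<inter> I = {}" by (rule connectedD[OF I(2) U V])
  then show ?thesis
  proof
    assume "U \<inter> I = {}"
    then have "deriv th s = 0" if "s \<in> I" for s using that unfolding U_def by blast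
    then have "(th has_real_derivative 0) (at s)" if "s \<in> I" for s
      using C2_on_has_derivative(1)[OF Ct that] that by simp
    then show ?thesis using constant_on_convex_if_deriv_zero[OF I(3)] by blast
  next
    assume "V \<inter> I = {}"
    then have "I \<subseteq> U" using cover by blast
    then show ?thesis using x_U by blast
  qed
qed

lemma A_inv_V_translator_iff_profile:
  assumes "A_inv_curve I x th"
  shows "A_inv_V_translator I x th \<longleftrightarrow> (\<exists>th0. \<forall>s\<in>I. th s = th0) \<or> (\<forall>s\<in>I. x s = 0)"
proof
  assume "A_inv_V_translator I x th"
  then show "(\<exists>th0. \<forall>s\<in>I. th s = th0) \<or> (\<forall>s\<in>I. x s = 0)"
    using A_translator_dichotomy[OF assms] A_inv_V_translator_iff_ode[OF assms] by blast
next
  have I: "open I" using assms unfolding A_inv_curve_def open_interval_def by simp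
  assume "(\<exists>th0. \<forall>s\<in>I. th s = th0) \<or> (\<forall>s\<in>I. x s = 0)"
  then consider th0 where "\<And>s. s \<in> I \<Longrightarrow> th s = th0" | "\<And>s. s \<in> I \<Longrightarrow> x s = 0" by blast
  then show "A_inv_V_translator I x th"
  proof cases
    case 1
    then show ?thesis unfolding A_inv_V_translator_iff_ode[OF assms]
      using deriv_zero_if_constant_on_open[where f = th and c = th0, OF I 1] by simp
  next
    case 2
    then show ?thesis unfolding A_inv_V_translator_iff_ode[OF assms]
      using deriv_zero_if_constant_on_open[where f = x and c = 0, OF I 2] by simp
  qed
qed

lemma rot_V_translator_deriv_phi:
  assumes "rot_V_translator I x y phi" "s \<in> I" "y s > 0"
  shows "deriv phi s = - (y s * cos (phi s) + x s * sin (phi s)) / y s"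
proof -
  have "deriv phi s / 2 + cos (phi s) = - sin (phi s) * (x s / (2 * y s)) + cos (phi s) * (y s / (2 * y s))"
    using assms unfolding rot_V_translator_def H_rot_def frame_inner_def N_rot_def V_frame_def by simp
  then show ?thesis using assms(3) by (simp add: field_simps)
qed

theorem mainTheorem3:
  shows
  "(\<forall>I y th. N_inv_curve I y th \<longrightarrow>
      (N_inv_V_translator I y th \<longleftrightarrow>
         ((\<exists>th0. \<forall>s\<in>I. th s = th0) \<or>
          (\<exists>c>0. \<exists>s0. \<forall>s\<in>I. \<bar>th s - s0\<bar> < pi / sqrt 2 \<and>
                              y s = c * (1 + cos (sqrt 2 * (th s - s0)))))))
   \<and>
   (\<forall>I x th. A_inv_curve I x th \<longrightarrow>
      (A_inv_V_translator I x th \<longleftrightarrow>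
         ((\<exists>th0. \<forall>s\<in>I. th s = th0) \<or> (\<forall>s\<in>I. x s = 0))))
   \<and>
   (\<forall>I x y phi. open_interval I \<longrightarrow>
      (\<forall>s\<in>I. x differentiable (at s) \<and> y differentiable (at s) \<and> phi differentiable (at s) \<and>
              y s > 0 \<and> deriv x s = 2 * y s * cos (phi s) \<and> deriv y s = 2 * y s * sin (phi s)) \<longrightarrow>
      rot_V_translator I x y phi \<longrightarrow>
      (\<forall>s\<in>I. deriv phi s = - (y s * cos (phi s) + x s * sin (phi s)) / y s))"
  by (intro conjI allI impI ballI)
    (simp_all add: N_inv_V_translator_iff_profile A_inv_V_translator_iff_profile rot_V_translator_deriv_phi)

end
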